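(* For $\epsilon > 0$ let $f_\epsilon(\theta) = \epsilon + \cos\theta$, viewed as a holomorphic function on the complex cylinder $\mathcal C = \mathbb C / 2\pi\mathbb Z$. For a piecewise-$C^1$ closed curve $\gamma$ in $\mathcal C$ that is homotopic to the real circle $\{\theta : \Im\theta = 0\}$ (traversed once in the direction of increasing $\Re\theta$), define $$Z_\gamma(\epsilon) = \int_\gamma f_\epsilon(\theta)\,\mathrm d\theta,\qquad Z_{Q,\gamma}(\epsilon) = \int_\gamma |f_\epsilon(\theta)|\,|\mathrm d\theta|,\qquad \langle\sigma\rangle_\gamma(\epsilon) = \frac{Z_\gamma(\epsilon)}{Z_{Q,\gamma}(\epsilon)}.$$ Then $Z_\gamma(\epsilon) = 2\pi\epsilon$ for every such $\gamma$, and there is a constant $C$ such that for all sufficiently small $\epsilon>0$ and every such curve $\gamma$, $$\langle\sigma\rangle_\gamma(\epsilon) \le \frac{\pi}{2}\,\epsilon + C\epsilon^2 .$$ In particular no such deformation of the contour achieves an average sign larger than $\frac{\pi}{2}\epsilon + O(\epsilon^2)$, the same order as on the real circle.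
   Context: This models a one-site "lattice" with partition function $Z(\epsilon)=\int_0^{2\pi}(\epsilon+\cos\theta)\,\mathrm d\theta$, i.e. Boltzmann factor $e^{-S}$ with $S_\epsilon(\theta) = -\log(\epsilon+\cos\theta)$. The "average sign" on an integration contour is the ratio of the partition function (integral of the Boltzmann factor along the contour) to the quenched partition function (integral of the absolute value of the Boltzmann factor with respect to arc length along the contour). Contour deformations are homotopies within the complexified domain of integration, the cylinder $\mathbb C/2\pi\mathbb Z$. *)

theory Defs
  imports "HOL-Complex_Analysis.Complex_Analysis"
begin

text \<open>Curves on the cylinder C/2piZ are represented by their lifts to the complex
plane: a path gamma on [0,1] in the complex plane whose projection to the cylinder
is a closed curve (gamma 1 - gamma 0 in 2 pi Z).\<close>

definition f_eps :: "real \<Rightarrow> complex \<Rightarrow> complex" where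
  "f_eps \<epsilon> \<theta> = complex_of_real \<epsilon> + cos \<theta>"

definition cyl_closed :: "(real \<Rightarrow> complex) \<Rightarrow> bool" where
  "cyl_closed g \<longleftrightarrow> (\<exists>k::int. g 1 - g 0 = complex_of_real (2 * pi * of_int k))"

definition cyl_homotopic_to_real_circle :: "(real \<Rightarrow> complex) \<Rightarrow> bool" where
  "cyl_homotopic_to_real_circle g \<longleftrightarrow>
     (\<exists>H :: real \<times> real \<Rightarrow> complex.
        continuous_on ({0..1} \<times> {0..1}) H \<and>
        (\<forall>t\<in>{0..1}. H (0, t) = g t \<and> H (1, t) = complex_of_real (2 * pi * t)) \<and>
        (\<forall>s\<in>{0..1}. \<exists>k::int. H (s, 1) - H (s, 0) = complex_of_real (2 * pi * of_int k)))"

definition admissible_contour :: "(real \<Rightarrow> complex) \<Rightarrow> bool" where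
  "admissible_contour g \<longleftrightarrow> valid_path g \<and> cyl_closed g \<and> cyl_homotopic_to_real_circle g"

definition Z_part :: "real \<Rightarrow> (real \<Rightarrow> complex) \<Rightarrow> complex" where
  "Z_part \<epsilon> g = contour_integral g (f_eps \<epsilon>)"

definition Z_quenched :: "real \<Rightarrow> (real \<Rightarrow> complex) \<Rightarrow> real" where
  "Z_quenched \<epsilon> g = integral {0..1} (\<lambda>t. cmod (f_eps \<epsilon> (g t)) * norm (vector_derivative g (at t)))"

definition avg_sign :: "real \<Rightarrow> (real \<Rightarrow> complex) \<Rightarrow> complex" where
  "avg_sign \<epsilon> g = Z_part \<epsilon> g / complex_of_real (Z_quenched \<epsilon> g)"

end

theory Submission
  imports Defs
begin

text \<open>\<open>f\<^sub>\<epsilon>\<close> has the entire primitive \<open>F\<^sub>\<epsilon>(z) = \<epsilon> z + sin z\<close> with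
  \<open>F\<^sub>\<epsilon>(z + 2\<pi>) = F\<^sub>\<epsilon>(z) + 2\<pi>\<epsilon>\<close>, and an admissible contour ends at its start shifted
  by \<open>2\<pi>\<close>, so \<open>Z = 2\<pi>\<epsilon>\<close>.  The density \<open>|f\<^sub>\<epsilon>| |d\<theta>|\<close> dominates the variation of
  \<open>F\<^sub>\<epsilon>\<close> along the contour.  Since \<open>Re \<theta>\<close> advances by \<open>2\<pi>\<close>, the contour meets a zero
  \<open>u\<close> of the cosine and later \<open>u + \<pi>\<close>, where \<open>Re F\<^sub>\<epsilon> = \<epsilon> Re \<theta> \<plusminus> cosh (Im \<theta>)\<close> with
  opposite signs.  Measured at the start, at these two points and at the end, the drift
  \<open>\<epsilon> Re \<theta>\<close> cancels and the variation of \<open>Re F\<^sub>\<epsilon>\<close> is at least \<open>2 (cosh + cosh) \<ge> 4\<close>.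
  So \<open>Z\<^sub>Q \<ge> 4\<close> for every \<open>\<epsilon>\<close>, and the average sign is at most \<open>2\<pi>\<epsilon>/4 = \<pi>\<epsilon>/2\<close>:
  the bound holds with \<open>C = 0\<close>.\<close>

lemma has_integral_primitive_along_path:
  fixes F f :: "complex \<Rightarrow> complex" and g :: "real \<Rightarrow> complex"
  assumes F: "\<And>z. (F has_field_derivative f z) (at z)"
    and g: "valid_path g" and ab: "0 \<le> a" "a \<le> b" "b \<le> 1"
  shows "((\<lambda>t. f (g t) * vector_derivative g (at t)) has_integral (F (g b) - F (g a))) {a..b}"
proof -
  have "f contour_integrable_on g"
    using contour_integral_primitive[OF F g subset_UNIV] by (auto simp: contour_integrable_on_def)
  then have integrable: "(\<lambda>t. f (g t) * vector_derivative g (at t)) integrable_on {a..b}"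
    unfolding contour_integrable_on by (rule integrable_on_subinterval) (use ab in auto)
  have "(f has_contour_integral integral {a..b} (\<lambda>t. f (g t) * vector_derivative g (at t)))
          (subpath a b g)"
    using has_contour_integral_subpath[OF \<open>f contour_integrable_on g\<close> g] ab by auto
  moreover have "(f has_contour_integral (F (g b) - F (g a))) (subpath a b g)"
    using contour_integral_primitive[OF F valid_path_subpath[OF g] subset_UNIV] ab by simp
  ultimately have "integral {a..b} (\<lambda>t. f (g t) * vector_derivative g (at t)) = F (g b) - F (g a)"
    by (rule has_contour_integral_unique)
  with integrable_integral[OF integrable] show ?thesis
    by simp
qed

lemma norm_primitive_diff_le_integral:
  fixes F f :: "complex \<Rightarrow> complex" and g :: "real \<Rightarrow> complex"
  assumes F: "\<And>z. (F has_field_derivative f z) (at z)"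
    and g: "valid_path g" and ab: "0 \<le> a" "a \<le> b" "b \<le> 1"
    and integrable: "(\<lambda>t. norm (f (g t)) * norm (vector_derivative g (at t))) integrable_on {0..1}"
  shows "norm (F (g b) - F (g a)) \<le>
           integral {a..b} (\<lambda>t. norm (f (g t)) * norm (vector_derivative g (at t)))"
proof -
  note primitive = has_integral_primitive_along_path[OF F g ab]
  have "(\<lambda>t. norm (f (g t)) * norm (vector_derivative g (at t))) integrable_on {a..b}"
    using integrable by (rule integrable_on_subinterval) (use ab in auto)
  then have "norm (integral {a..b} (\<lambda>t. f (g t) * vector_derivative g (at t))) \<le>
               integral {a..b} (\<lambda>t. norm (f (g t)) * norm (vector_derivative g (at t)))"
    by (rule integral_norm_bound_integral[OF has_integral_integrable[OF primitive]])
       (simp add: norm_mult)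
  then show ?thesis
    using integral_unique[OF primitive] by simp
qed

lemma norm_primitive_three_point_le_integral:
  fixes F f :: "complex \<Rightarrow> complex" and g :: "real \<Rightarrow> complex"
  assumes F: "\<And>z. (F has_field_derivative f z) (at z)"
    and g: "valid_path g" and st: "0 \<le> s" "s \<le> t" "t \<le> 1"
    and integrable: "(\<lambda>t. norm (f (g t)) * norm (vector_derivative g (at t))) integrable_on {0..1}"
  shows "norm (2 * (F (g s) - F (g t)) + (F (g 1) - F (g 0))) \<le>
           integral {0..1} (\<lambda>t. norm (f (g t)) * norm (vector_derivative g (at t)))"
proof -
  define K where "K a b = integral {a..b} (\<lambda>t. norm (f (g t)) * norm (vector_derivative g (at t)))"
    for a b
  have "(\<lambda>t. norm (f (g t)) * norm (vector_derivative g (at t))) integrable_on {0..t}"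
    using integrable by (rule integrable_on_subinterval) (use st in auto)
  then have "K 0 s + K s t = K 0 t"
    unfolding K_def by (rule Henstock_Kurzweil_Integration.integral_combine[OF st(1,2)])
  moreover have "K 0 t + K t 1 = K 0 1"
    unfolding K_def
    by (rule Henstock_Kurzweil_Integration.integral_combine[OF _ st(3) integrable]) (use st in linarith)
  ultimately have split: "K 0 1 = K 0 s + K s t + K t 1"
    by linarith
  have rearrange: "2 * (F (g s) - F (g t)) + (F (g 1) - F (g 0)) =
          (F (g s) - F (g 0)) - (F (g t) - F (g s)) + (F (g 1) - F (g t))"
    by (simp add: algebra_simps)
  have "norm (2 * (F (g s) - F (g t)) + (F (g 1) - F (g 0))) \<le>
          norm (F (g s) - F (g 0)) + norm (F (g t) - F (g s)) + norm (F (g 1) - F (g t))"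
    unfolding rearrange
    using norm_triangle_ineq[of "F (g s) - F (g 0) - (F (g t) - F (g s))" "F (g 1) - F (g t)"]
      norm_triangle_ineq4[of "F (g s) - F (g 0)" "F (g t) - F (g s)"]
    by linarith
  also have "\<dots> \<le> K 0 s + K s t + K t 1"
    unfolding K_def using st
    by (intro add_mono norm_primitive_diff_le_integral[OF F g _ _ _ integrable]) auto
  also have "\<dots> = K 0 1"
    by (fact split [symmetric])
  finally show ?thesis
    unfolding K_def .
qed

lemma continuous_on_Ints_constant:
  fixes q :: "'a::topological_space \<Rightarrow> 'b::real_normed_algebra_1"
  assumes "connected S" "continuous_on S q" "\<And>s. s \<in> S \<Longrightarrow> q s \<in> \<int>"
  shows "q constant_on S"
proof (rule continuous_discrete_range_constant[OF assms(1,2)])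
  fix x assume "x \<in> S"
  show "\<exists>e>0. \<forall>y. y \<in> S \<and> q y \<noteq> q x \<longrightarrow> e \<le> norm (q y - q x)"
  proof (intro exI[of _ 1] allI impI conjI)
    fix y assume y: "y \<in> S \<and> q y \<noteq> q x"
    obtain m n where "q y = of_int m" "q x = of_int n"
      using assms(3) y \<open>x \<in> S\<close> by (meson Ints_cases)
    with y show "1 \<le> norm (q y - q x)"
      by (simp flip: of_int_diff) linarith
  qed simp
qed

lemma cyl_homotopic_to_real_circle_endpoints:
  assumes "cyl_homotopic_to_real_circle g"
  shows "g 1 = g 0 + complex_of_real (2 * pi)"
proof -
  obtain H :: "real \<times> real \<Rightarrow> complex" where H: "continuous_on ({0..1} \<times> {0..1}) H"
    and ends: "\<forall>t\<in>{0..1}. H (0, t) = g t \<and> H (1, t) = complex_of_real (2 * pi * t)"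
    and closed: "\<forall>s\<in>{0..1}. \<exists>k::int. H (s, 1) - H (s, 0) = complex_of_real (2 * pi * of_int k)"
    using assms unfolding cyl_homotopic_to_real_circle_def by blast
  define q where "q s = (H (s, 1) - H (s, 0)) / complex_of_real (2 * pi)" for s
  have "continuous_on {0..1} q"
    unfolding q_def
    by (intro continuous_intros continuous_on_compose2[OF H]) auto
  moreover have "q s \<in> \<int>" if "s \<in> {0..1}" for s
    using closed that by (force simp: q_def)
  ultimately have "q constant_on {0..1}"
    by (intro continuous_on_Ints_constant) auto
  then have "q 0 = q 1"
    by (force simp: constant_on_def)
  then show ?thesis
    using ends by (simp add: q_def) (metis add.commute diff_add_cancel)
qed

lemma continuous_advance_2pi_crosses_cos_zero:
  fixes x :: "real \<Rightarrow> real"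
  assumes x: "continuous_on {0..1} x" and advance: "x 0 + 2 * pi \<le> x 1"
  shows "\<exists>s t. 0 \<le> s \<and> s \<le> t \<and> t \<le> 1 \<and> cos (x s) = 0 \<and> x t = x s + pi"
proof -
  define n where "n = \<lceil>(x 0 - pi / 2) / pi\<rceil>"
  define u where "u = of_int n * pi + pi / 2"
  have "cos u = 0"
    unfolding u_def cos_zero_iff_int2 by blast
  have "(x 0 - pi / 2) / pi \<le> of_int n" "of_int n - 1 < (x 0 - pi / 2) / pi"
    unfolding n_def by linarith+
  then have "x 0 - pi / 2 \<le> of_int n * pi" "(of_int n - 1) * pi < x 0 - pi / 2"
    by (simp_all add: pos_divide_le_eq pos_less_divide_eq)
  then have u: "x 0 \<le> u" "u + pi \<le> x 1"
    using advance unfolding u_def by (simp_all add: algebra_simps)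
  obtain s where s: "0 \<le> s" "s \<le> 1" "x s = u"
    using IVT'[of x 0 u 1] x u pi_gt_zero by auto
  obtain t where "s \<le> t" "t \<le> 1" "x t = u + pi"
    using IVT'[of x s "u + pi" 1] continuous_on_subset[OF x] s u by auto
  with s \<open>cos u = 0\<close> show ?thesis
    by auto
qed

definition f_eps_primitive :: "real \<Rightarrow> complex \<Rightarrow> complex" where
  "f_eps_primitive \<epsilon> z = complex_of_real \<epsilon> * z + sin z"

lemma has_field_derivative_f_eps_primitive:
  "(f_eps_primitive \<epsilon> has_field_derivative f_eps \<epsilon> z) (at z)"
  unfolding f_eps_primitive_def f_eps_def by (auto intro!: derivative_eq_intros)

lemma f_eps_primitive_add_2pi:
  "f_eps_primitive \<epsilon> (z + complex_of_real (2 * pi)) = f_eps_primitive \<epsilon> z + complex_of_real (2 * pi * \<epsilon>)"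
proof -
  have "sin (z + complex_of_real (2 * pi)) = sin z"
    by (simp add: sin_add flip: cos_of_real sin_of_real)
  then show ?thesis
    unfolding f_eps_primitive_def by (simp add: algebra_simps)
qed

lemma Re_f_eps_primitive:
  "Re (f_eps_primitive \<epsilon> z) = \<epsilon> * Re z + sin (Re z) * cosh (Im z)"
  unfolding f_eps_primitive_def by (simp add: Re_sin cosh_def)

lemma Z_part_admissible:
  assumes "admissible_contour g"
  shows "Z_part \<epsilon> g = complex_of_real (2 * pi * \<epsilon>)"
proof -
  have g: "valid_path g" and ends: "g 1 = g 0 + complex_of_real (2 * pi)"
    using assms cyl_homotopic_to_real_circle_endpoints unfolding admissible_contour_def by blast+
  have "(f_eps \<epsilon> has_contour_integral (f_eps_primitive \<epsilon> (g 1) - f_eps_primitive \<epsilon> (g 0))) g"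
    using contour_integral_primitive[OF has_field_derivative_f_eps_primitive g subset_UNIV]
    by (simp add: pathstart_def pathfinish_def)
  then have "Z_part \<epsilon> g = f_eps_primitive \<epsilon> (g 1) - f_eps_primitive \<epsilon> (g 0)"
    unfolding Z_part_def by (rule contour_integral_unique)
  then show ?thesis
    unfolding ends f_eps_primitive_add_2pi by simp
qed

lemma Z_quenched_ge_4:
  assumes "admissible_contour g"
    and integrable: "(\<lambda>t. cmod (f_eps \<epsilon> (g t)) * norm (vector_derivative g (at t))) integrable_on {0..1}"
  shows "4 \<le> Z_quenched \<epsilon> g"
proof -
  have g: "valid_path g" and ends: "g 1 = g 0 + complex_of_real (2 * pi)"
    using assms(1) cyl_homotopic_to_real_circle_endpoints unfolding admissible_contour_def by blast+
  define x where "x t = Re (g t)" for t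
  have "continuous_on {0..1} x"
    using valid_path_imp_path[OF g] unfolding x_def path_def by (intro continuous_intros)
  moreover have "x 0 + 2 * pi \<le> x 1"
    unfolding x_def ends by simp
  ultimately obtain s t where st: "0 \<le> s" "s \<le> t" "t \<le> 1"
    and cos_s: "cos (x s) = 0" and t: "x t = x s + pi"
    using continuous_advance_2pi_crosses_cos_zero by blast
  define P where "P = f_eps_primitive \<epsilon>"
  have "Re (2 * (P (g s) - P (g t)) + (P (g 1) - P (g 0))) =
          2 * sin (x s) * (cosh (Im (g s)) + cosh (Im (g t)))"
    unfolding P_def ends f_eps_primitive_add_2pi
    by (simp add: Re_f_eps_primitive t sin_periodic_pi algebra_simps flip: x_def)
  moreover have "\<bar>sin (x s)\<bar> = 1"
    using sin_cos_squared_add[of "x s"] cos_s by (auto simp: power2_eq_1_iff)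
  ultimately have "4 \<le> \<bar>Re (2 * (P (g s) - P (g t)) + (P (g 1) - P (g 0)))\<bar>"
    using cosh_real_ge_1[of "Im (g s)"] cosh_real_ge_1[of "Im (g t)"] by (simp add: abs_mult)
  also have "\<dots> \<le> norm (2 * (P (g s) - P (g t)) + (P (g 1) - P (g 0)))"
    by (rule abs_Re_le_cmod)
  also have "\<dots> \<le> Z_quenched \<epsilon> g"
    unfolding P_def Z_quenched_def
    by (rule norm_primitive_three_point_le_integral[OF has_field_derivative_f_eps_primitive g st integrable])
  finally show ?thesis .
qed

lemma Re_avg_sign_le:
  assumes "admissible_contour g" "0 \<le> \<epsilon>"
  shows "Re (avg_sign \<epsilon> g) \<le> pi / 2 * \<epsilon>"
proof -
  have avg: "Re (avg_sign \<epsilon> g) = 2 * pi * \<epsilon> / Z_quenched \<epsilon> g"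
    unfolding avg_sign_def Z_part_admissible[OF assms(1)]
    by (simp add: Re_divide_of_real flip: of_real_mult)
  show ?thesis
  proof (cases "(\<lambda>t. cmod (f_eps \<epsilon> (g t)) * norm (vector_derivative g (at t))) integrable_on {0..1}")
    case True
    then have "4 \<le> Z_quenched \<epsilon> g"
      by (rule Z_quenched_ge_4[OF assms(1)])
    then have "2 * pi * \<epsilon> / Z_quenched \<epsilon> g \<le> 2 * pi * \<epsilon> / 4"
      using assms(2) by (intro divide_left_mono) auto
    then show ?thesis
      unfolding avg by simp
  next
    case False
    \<comment> \<open>\<open>Z_quenched\<close> is then the junk value \<open>0\<close>, and so is the quotient\<close>
    then have "Z_quenched \<epsilon> g = 0"
      unfolding Z_quenched_def by (simp add: not_integrable_integral)
    then show ?thesis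
      unfolding avg using assms(2) by simp
  qed
qed

theorem mainTheorem1:
  shows "(\<forall>\<epsilon>>0. \<forall>g. admissible_contour g \<longrightarrow> Z_part \<epsilon> g = complex_of_real (2 * pi * \<epsilon>)) \<and>
         (\<exists>C::real. \<exists>\<epsilon>0>0. \<forall>\<epsilon>. 0 < \<epsilon> \<and> \<epsilon> < \<epsilon>0 \<longrightarrow>
            (\<forall>g. admissible_contour g \<longrightarrow> Re (avg_sign \<epsilon> g) \<le> pi / 2 * \<epsilon> + C * \<epsilon>\<^sup>2))"
proof (intro conjI)
  show "\<forall>\<epsilon>>0. \<forall>g. admissible_contour g \<longrightarrow> Z_part \<epsilon> g = complex_of_real (2 * pi * \<epsilon>)"
    using Z_part_admissible by blast
  show "\<exists>C::real. \<exists>\<epsilon>0>0. \<forall>\<epsilon>. 0 < \<epsilon> \<and> \<epsilon> < \<epsilon>0 \<longrightarrow>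
          (\<forall>g. admissible_contour g \<longrightarrow> Re (avg_sign \<epsilon> g) \<le> pi / 2 * \<epsilon> + C * \<epsilon>\<^sup>2)"
    using Re_avg_sign_le by (intro exI[of _ 0] exI[of _ 1]) auto
qed

end
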